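(* Let $G$ be a persistent graph with vertex order $<$, let $k\ge 4$, and let $p_1,\dots,p_k\in V(G)$ form an induced cycle in this order (edges $\{p_i,p_{i+1}\}$ and $\{p_k,p_1\}$). Then, after possibly cyclically shifting the indices and/or reversing the cyclic order of the indices, $p_1>p_3>p_4>\dots>p_k>p_2$.
   Context: A persistent graph is a graph $G$ together with a linear order $v_1<v_2<\dots<v_n$ on $V(G)$ such that (1) $\{v_i,v_{i+1}\}\in E(G)$ for all $i$ (a Hamiltonian path following the order); (2) X-property: for all $p<q<r<s$, if $\{p,r\}\in E(G)$ and $\{q,s\}\in E(G)$ then $\{p,s\}\in E(G)$; (3) bar-property: if $\{p,q\}\in E(G)$ and $p,q$ are not consecutive in the order, then there is a vertex $r$ with $p<r<q$ adjacent to both $p$ and $q$. *)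

theory Defs
  imports Main
begin

text \<open>A finite simple graph on a vertex set V of a linearly ordered type; the vertex
order of the persistent graph is the order of the type restricted to V.\<close>

definition simple_graph :: "'a set \<Rightarrow> ('a \<Rightarrow> 'a \<Rightarrow> bool) \<Rightarrow> bool" where
  "simple_graph V E \<longleftrightarrow> finite V \<and>
     (\<forall>x y. E x y \<longrightarrow> x \<in> V \<and> y \<in> V) \<and>
     (\<forall>x y. E x y \<longrightarrow> E y x) \<and> (\<forall>x. \<not> E x x)"

definition consecutive :: "'a::linorder set \<Rightarrow> 'a \<Rightarrow> 'a \<Rightarrow> bool" where
  "consecutive V u w \<longleftrightarrow> u \<in> V \<and> w \<in> V \<and> u < w \<and> \<not> (\<exists>r\<in>V. u < r \<and> r < w)"

definition persistent_graph :: "'a::linorder set \<Rightarrow> ('a \<Rightarrow> 'a \<Rightarrow> bool) \<Rightarrow> bool" where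
  "persistent_graph V E \<longleftrightarrow> simple_graph V E \<and>
     (\<forall>u w. consecutive V u w \<longrightarrow> E u w) \<and>
     (\<forall>p q r s. p \<in> V \<longrightarrow> q \<in> V \<longrightarrow> r \<in> V \<longrightarrow> s \<in> V \<longrightarrow>
        p < q \<longrightarrow> q < r \<longrightarrow> r < s \<longrightarrow> E p r \<longrightarrow> E q s \<longrightarrow> E p s) \<and>
     (\<forall>p q. E p q \<longrightarrow> p < q \<longrightarrow> \<not> consecutive V p q \<longrightarrow>
        (\<exists>r\<in>V. p < r \<and> r < q \<and> E p r \<and> E r q))"

definition induced_cycle :: "'a set \<Rightarrow> ('a \<Rightarrow> 'a \<Rightarrow> bool) \<Rightarrow> nat \<Rightarrow> (nat \<Rightarrow> 'a) \<Rightarrow> bool" where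
  "induced_cycle V E k p \<longleftrightarrow>
     (\<forall>i<k. p i \<in> V) \<and> inj_on p {..<k} \<and>
     (\<forall>i<k. \<forall>j<k. E (p i) (p j) \<longleftrightarrow> (j = (i + 1) mod k \<or> i = (j + 1) mod k))"

definition cyc_reindex :: "nat \<Rightarrow> nat \<Rightarrow> bool \<Rightarrow> (nat \<Rightarrow> 'a) \<Rightarrow> nat \<Rightarrow> 'a" where
  "cyc_reindex k s rv p i = (if rv then p ((s + (k - i mod k)) mod k) else p ((s + i) mod k))"

end

theory Submission
  imports Defs
begin

text \<open>
Rotate and possibly reflect the cycle so that q 0 is its highest vertex and q 1 < q (k - 1).
The X-property says that two crossing cycle edges a < b < c < d force the chord a d, so along
the path q (k - 1), q (k - 2), ... no edge may straddle the level of a suitable vertex.  Walking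
down this path from q (k - 1) shows first that q 1 is the lowest vertex and then, for
j = 2, 3, ..., that q j lies above all later vertices, once q (k - 1) < q 2 is known.

That last inequality is where the bar-property enters.  Otherwise q 2 lies below all of
q 3, ..., q (k - 1); iterating the bar-property under the edge q 1 q 0 puts q 2 into a triangle
u < q 2 < v, and the path q 3, ..., q (k - 1), q 0 must jump over v, which creates a chord at
q 2 (or, through u, at q 1).
\<close>

definition cycle_adjacent :: "nat \<Rightarrow> nat \<Rightarrow> nat \<Rightarrow> bool" where
  "cycle_adjacent k i j \<longleftrightarrow> j = (i + 1) mod k \<or> i = (j + 1) mod k"

lemma induced_cycle_iff:
  "induced_cycle V E k p \<longleftrightarrow> (\<forall>i<k. p i \<in> V) \<and> inj_on p {..<k} \<and>
     (\<forall>i<k. \<forall>j<k. E (p i) (p j) \<longleftrightarrow> cycle_adjacent k i j)"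
  by (simp add: induced_cycle_def cycle_adjacent_def)

lemma cycle_adjacent_iff:
  assumes "i < k" "j < k"
  shows "cycle_adjacent k i j \<longleftrightarrow>
    j = i + 1 \<or> i = j + 1 \<or> (i = 0 \<and> j = k - 1) \<or> (j = 0 \<and> i = k - 1)"
  using assms by (auto simp: cycle_adjacent_def mod_Suc)

lemma induced_cycle_comp:
  assumes "induced_cycle V E k p" and "f ` {..<k} \<subseteq> {..<k}" and "inj_on f {..<k}"
    and "\<And>i j. i < k \<Longrightarrow> j < k \<Longrightarrow>
           cycle_adjacent k (f i) (f j) \<longleftrightarrow> cycle_adjacent k i j"
  shows "induced_cycle V E k (p \<circ> f)"
proof -
  have "inj_on p (f ` {..<k})"
    using assms(1,2) by (auto simp: induced_cycle_iff intro: inj_on_subset)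
  then show ?thesis
    using assms by (auto simp: induced_cycle_iff comp_inj_on subset_eq)
qed

lemma cycle_succ_eq_iff:
  fixes x y k :: nat
  assumes "x < k" "y < k"
  shows "(x + 1) mod k = (y + 1) mod k \<longleftrightarrow> x = y"
  using assms by (auto simp: mod_Suc split: if_splits)

lemma cycle_adjacent_comp:
  assumes "inj_on f {..<k}" and "f ` {..<k} \<subseteq> {..<k}"
    and "(\<forall>x<k. f ((x + 1) mod k) = (f x + 1) mod k) \<or>
         (\<forall>x<k. f x = (f ((x + 1) mod k) + 1) mod k)"
    and "i < k" "j < k"
  shows "cycle_adjacent k (f i) (f j) \<longleftrightarrow> cycle_adjacent k i j"
proof -
  have succ: "(i + 1) mod k < k" "(j + 1) mod k < k" using assms(4) by auto
  have f_eq: "f x = f y \<longleftrightarrow> x = y" if "x < k" "y < k" for x y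
    using assms(1) that by (auto dest: inj_onD)
  have f_lt: "f x < k" if "x < k" for x using assms(2) that by auto
  from assms(3) show ?thesis
  proof
    assume "\<forall>x<k. f ((x + 1) mod k) = (f x + 1) mod k"
    then show ?thesis
      unfolding cycle_adjacent_def using f_eq succ assms(4,5) by metis
  next
    assume anti: "\<forall>x<k. f x = (f ((x + 1) mod k) + 1) mod k"
    have "f i = (f j + 1) mod k \<longleftrightarrow> j = (i + 1) mod k"
      using anti assms(4,5) f_eq[OF succ(1) assms(5)]
        cycle_succ_eq_iff[OF f_lt f_lt, OF succ(1) assms(5)]
      by metis
    moreover have "f j = (f i + 1) mod k \<longleftrightarrow> i = (j + 1) mod k"
      using anti assms(4,5) f_eq[OF succ(2) assms(4)]
        cycle_succ_eq_iff[OF f_lt f_lt, OF succ(2) assms(4)]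
      by metis
    ultimately show ?thesis unfolding cycle_adjacent_def by blast
  qed
qed

lemma induced_cycle_rotate:
  assumes "induced_cycle V E k p"
  shows "induced_cycle V E k (\<lambda>i. p ((s + i) mod k))"
proof -
  have inverse: "((k - s mod k) + (s + i) mod k) mod k = i" if "i < k" for i
  proof -
    have "((k - s mod k) + (s + i) mod k) mod k = (k - s mod k + s mod k + i) mod k"
      by (metis mod_add_left_eq mod_add_right_eq add.assoc)
    also have "\<dots> = i" using that by simp
    finally show ?thesis .
  qed
  have "induced_cycle V E k (p \<circ> (\<lambda>i. (s + i) mod k))"
  proof (rule induced_cycle_comp[OF assms])
    show "inj_on (\<lambda>i. (s + i) mod k) {..<k}"
      by (rule inj_on_inverseI[where g = "\<lambda>j. (k - s mod k + j) mod k"]) (use inverse in auto)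
    show "(\<lambda>i. (s + i) mod k) ` {..<k} \<subseteq> {..<k}" by auto
    show "cycle_adjacent k ((s + i) mod k) ((s + j) mod k) \<longleftrightarrow> cycle_adjacent k i j"
      if "i < k" "j < k" for i j
      by (rule cycle_adjacent_comp[OF \<open>inj_on _ _\<close> \<open>_ \<subseteq> _\<close> _ that])
        (simp add: mod_simps add.assoc)
  qed
  then show ?thesis by (simp add: comp_def)
qed

lemma induced_cycle_reflect:
  assumes "induced_cycle V E k p"
  shows "induced_cycle V E k (\<lambda>i. p ((k - i mod k) mod k))"
proof -
  let ?r = "\<lambda>i. (k - i mod k) mod k"
  have involution: "?r (?r i) = i" if "i < k" for i
    using that by (cases "i = 0") auto
  have "induced_cycle V E k (p \<circ> ?r)"
  proof (rule induced_cycle_comp[OF assms])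
    show "inj_on ?r {..<k}"
      by (rule inj_on_inverseI[where g = ?r]) (use involution in auto)
    show "?r ` {..<k} \<subseteq> {..<k}" by auto
    have "?r x = (?r ((x + 1) mod k) + 1) mod k" if "x < k" for x
      using that by (cases "x + 1 = k") (auto simp: mod_Suc Suc_diff_Suc)
    then show "cycle_adjacent k (?r i) (?r j) \<longleftrightarrow> cycle_adjacent k i j"
      if "i < k" "j < k" for i j
      by (intro cycle_adjacent_comp[OF \<open>inj_on _ _\<close> \<open>_ \<subseteq> _\<close> _ that]) blast
  qed
  then show ?thesis by (simp add: comp_def)
qed

lemma induced_cycle_cyc_reindex:
  assumes "induced_cycle V E k p"
  shows "induced_cycle V E k (cyc_reindex k s rv p)"
proof (cases rv)
  case True
  have "cyc_reindex k s rv p = (\<lambda>i. (\<lambda>j. p ((s + j) mod k)) ((k - i mod k) mod k))"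
    using True by (simp add: cyc_reindex_def fun_eq_iff mod_add_right_eq)
  then show ?thesis
    using induced_cycle_reflect[OF induced_cycle_rotate[OF assms]] by simp
next
  case False
  then have "cyc_reindex k s rv p = (\<lambda>i. p ((s + i) mod k))"
    by (simp add: cyc_reindex_def fun_eq_iff)
  then show ?thesis
    using induced_cycle_rotate[OF assms] by simp
qed

lemma cyc_reindex_rooted:
  fixes p :: "nat \<Rightarrow> 'a::linorder"
  assumes "induced_cycle V E k p" "3 \<le> k"
  obtains s rv where "s < k"
    and "\<And>i. i < k \<Longrightarrow> cyc_reindex k s rv p i \<le> cyc_reindex k s rv p 0"
    and "cyc_reindex k s rv p 1 < cyc_reindex k s rv p (k - 1)"
proof -
  have "Max (p ` {..<k}) \<in> p ` {..<k}"
    using assms(2) by (intro Max_in) (auto simp: lessThan_empty_iff)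
  then obtain s where s: "s < k" "p s = Max (p ` {..<k})" by auto
  have top: "cyc_reindex k s rv p i \<le> cyc_reindex k s rv p 0" for rv i
    using s assms(2) by (auto simp: cyc_reindex_def)
  have swap: "cyc_reindex k s True p 1 = cyc_reindex k s False p (k - 1)"
    "cyc_reindex k s True p (k - 1) = cyc_reindex k s False p 1"
    using assms(2) by (simp_all add: cyc_reindex_def)
  have "cyc_reindex k s False p 1 \<noteq> cyc_reindex k s False p (k - 1)"
    using induced_cycle_cyc_reindex[OF assms(1), of s False] assms(2)
    by (auto simp: induced_cycle_def dest: inj_onD)
  then consider "cyc_reindex k s False p 1 < cyc_reindex k s False p (k - 1)"
    | "cyc_reindex k s True p 1 < cyc_reindex k s True p (k - 1)"
    using swap by fastforce
  then show thesis using that s(1) top by metis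
qed

lemma persistent_graph_edge_in:
  assumes "persistent_graph V E" "E x y"
  shows "x \<in> V" "y \<in> V"
proof -
  have "simple_graph V E" using assms(1) unfolding persistent_graph_def by (elim conjE)
  then show "x \<in> V" "y \<in> V" using assms(2) unfolding simple_graph_def by blast+
qed

lemma persistent_graph_cross:
  assumes "persistent_graph V E"
    and "a \<le> b" "b < c" "c \<le> d" "E a c" "E b d"
  shows "E a d"
proof (cases "a = b \<or> c = d")
  case True
  then show ?thesis using assms(5,6) by auto
next
  case False
  then have "a < b" "c < d" using assms(2,4) by auto
  moreover have "a \<in> V" "b \<in> V" "c \<in> V" "d \<in> V"
    using persistent_graph_edge_in[OF assms(1)] assms(5,6) by auto
  moreover have "\<forall>p q r s. p \<in> V \<longrightarrow> q \<in> V \<longrightarrow> r \<in> V \<longrightarrow> s \<in> V \<longrightarrow>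
        p < q \<longrightarrow> q < r \<longrightarrow> r < s \<longrightarrow> E p r \<longrightarrow> E q s \<longrightarrow> E p s"
    using assms(1) unfolding persistent_graph_def by (elim conjE)
  ultimately show ?thesis
    using assms(3,5,6) by blast
qed

lemma persistent_graph_bar:
  assumes "persistent_graph V E" "E a c" "a < c" "\<not> consecutive V a c"
  obtains r where "r \<in> V" "a < r" "r < c" "E a r" "E r c"
proof -
  have "\<forall>p q. E p q \<longrightarrow> p < q \<longrightarrow> \<not> consecutive V p q \<longrightarrow>
        (\<exists>r\<in>V. p < r \<and> r < q \<and> E p r \<and> E r q)"
    using assms(1) unfolding persistent_graph_def by (elim conjE)
  then show thesis using assms(2-4) that by blast
qed

lemma card_interval_less:
  fixes V :: "'a::linorder set"
  assumes "finite V" "x \<in> V" "a \<le> x" "x \<le> c" "\<not> (a' \<le> x \<and> x \<le> c')" "a \<le> a'" "c' \<le> c"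
  shows "card {y\<in>V. a' \<le> y \<and> y \<le> c'} < card {y\<in>V. a \<le> y \<and> y \<le> c}"
proof (rule psubset_card_mono)
  have "{y\<in>V. a' \<le> y \<and> y \<le> c'} \<subseteq> {y\<in>V. a \<le> y \<and> y \<le> c}"
    using assms(6,7) by auto
  moreover have "x \<in> {y\<in>V. a \<le> y \<and> y \<le> c} - {y\<in>V. a' \<le> y \<and> y \<le> c'}"
    using assms(2-5) by auto
  ultimately show "{y\<in>V. a' \<le> y \<and> y \<le> c'} \<subset> {y\<in>V. a \<le> y \<and> y \<le> c}"
    by blast
qed (use assms(1) in simp)

lemma persistent_graph_triangle:
  assumes pg: "persistent_graph V E"
    and "E a c" "a < b" "b < c" "b \<in> V"
  shows "\<exists>u v. a \<le> u \<and> u < b \<and> b < v \<and> v \<le> c \<and> E u b \<and> E b v \<and> E u v"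
  using assms(2-4)
proof (induction "card {x\<in>V. a \<le> x \<and> x \<le> c}" arbitrary: a c rule: less_induct)
  case less
  have "\<not> consecutive V a c"
    using less.prems \<open>b \<in> V\<close> by (auto simp: consecutive_def)
  then obtain r where r: "r \<in> V" "a < r" "r < c" "E a r" "E r c"
    using persistent_graph_bar[OF pg less.prems(1)] less.prems by force
  have "finite V" using pg by (simp add: persistent_graph_def simple_graph_def)
  have "a \<in> V" "c \<in> V" using persistent_graph_edge_in[OF pg less.prems(1)] .
  consider "b = r" | "b < r" | "r < b" by fastforce
  then show ?case
  proof cases
    case 1
    then show ?thesis using r less.prems by blast
  next
    case 2
    have "card {x\<in>V. a \<le> x \<and> x \<le> r} < card {x\<in>V. a \<le> x \<and> x \<le> c}"
      by (rule card_interval_less[OF \<open>finite V\<close> \<open>c \<in> V\<close>]) (use r in auto)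
    from less.hyps[OF this r(4) less.prems(2) 2] obtain u v
      where "a \<le> u" "u < b" "b < v" "v \<le> r" "E u b" "E b v" "E u v" by blast
    then show ?thesis using r(3) by (intro exI[of _ u] exI[of _ v]) auto
  next
    case 3
    have "card {x\<in>V. r \<le> x \<and> x \<le> c} < card {x\<in>V. a \<le> x \<and> x \<le> c}"
      by (rule card_interval_less[OF \<open>finite V\<close> \<open>a \<in> V\<close>]) (use r in auto)
    from less.hyps[OF this r(5) 3 less.prems(3)] obtain u v
      where "r \<le> u" "u < b" "b < v" "v \<le> c" "E u b" "E b v" "E u v" by blast
    then show ?thesis using r(2) by (intro exI[of _ u] exI[of _ v]) auto
  qed
qed

locale rooted_cycle =
  fixes V :: "'a::linorder set" and E :: "'a \<Rightarrow> 'a \<Rightarrow> bool"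
    and k :: nat and q :: "nat \<Rightarrow> 'a"
  assumes persistent: "persistent_graph V E"
    and k_ge_4: "4 \<le> k"
    and cycle: "induced_cycle V E k q"
    and top: "\<And>i. i < k \<Longrightarrow> q i \<le> q 0"
    and oriented: "q 1 < q (k - 1)"
begin

lemma q_in_V: "i < k \<Longrightarrow> q i \<in> V"
  using cycle by (simp add: induced_cycle_def)

lemma edge_iff:
  assumes "i < k" "j < k"
  shows "E (q i) (q j) \<longleftrightarrow>
    j = i + 1 \<or> i = j + 1 \<or> (i = 0 \<and> j = k - 1) \<or> (j = 0 \<and> i = k - 1)"
  using cycle assms by (simp add: induced_cycle_iff cycle_adjacent_iff)

lemma edge_next: "i + 1 < k \<Longrightarrow> E (q i) (q (i + 1))"
  using edge_iff by simp

lemma q_eq_iff: "i < k \<Longrightarrow> j < k \<Longrightarrow> q i = q j \<longleftrightarrow> i = j"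
  using cycle by (auto simp: induced_cycle_def dest: inj_onD)

lemma q_linear: "i < k \<Longrightarrow> j < k \<Longrightarrow> i \<noteq> j \<Longrightarrow> q i < q j \<or> q j < q i"
  using q_eq_iff[of i j] by auto

lemma q_less_q0: "0 < i \<Longrightarrow> i < k \<Longrightarrow> q i < q 0"
  using top[of i] q_eq_iff[of i 0] by auto

lemmas cross = persistent_graph_cross[OF persistent]

lemma q1_less:
  assumes "2 \<le> i" "i < k"
  shows "q 1 < q i"
proof -
  have "i \<le> k - 1" using assms(2) by simp
  then show ?thesis
  proof (induction rule: inc_induct)
    case base
    show ?case by (fact oriented)
  next
    case (step l)
    show ?case
    proof (rule ccontr)
      assume "\<not> q 1 < q l"
      then have "q l < q 1" using q_linear[of l 1] step assms by simp
      then have "E (q l) (q 0)"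
        using cross[of "q l" "q 1" "q (Suc l)" "q 0"] step top[of "Suc l"] edge_iff by auto
      then show False using edge_iff[of l 0] step assms by auto
    qed
  qed
qed

lemma q_last_less_q2: "q (k - 1) < q 2"
proof (rule ccontr)
  assume "\<not> q (k - 1) < q 2"
  then have q2_last: "q 2 < q (k - 1)" using q_linear[of "k - 1" 2] k_ge_4 by auto
  have q2_less: "q 2 < q i" if "3 \<le> i" "i < k" for i
  proof -
    have "i \<le> k - 1" using that by simp
    then show ?thesis
    proof (induction rule: inc_induct)
      case base
      show ?case by (fact q2_last)
    next
      case (step l)
      show ?case
      proof (rule ccontr)
        assume "\<not> q 2 < q l"
        then have "q l < q 2" using q_linear[of l 2] step that by auto
        then have "E (q 1) (q (Suc l))"
          using cross[of "q 1" "q l" "q 2" "q (Suc l)"] q1_less[of l] step that edge_iff[of 1 2]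
            edge_next[of l] k_ge_4
          by (simp add: less_imp_le)
        then show False using edge_iff[of 1 "Suc l"] step that by force
      qed
    qed
  qed
  obtain u v where uv: "q 1 \<le> u" "u < q 2" "q 2 < v" "v \<le> q 0" "E u v" "E (q 2) v"
    using persistent_graph_triangle[OF persistent, of "q 1" "q 0" "q 2"]
      edge_iff[of 1 0] q1_less[of 2] q_less_q0[of 2] q_in_V[of 2] k_ge_4 by auto
  have "q 3 < v"
  proof (rule ccontr)
    assume "\<not> q 3 < v"
    then have "E u (q 3)" using cross[of u "q 2" v "q 3"] uv edge_iff[of 2 3] k_ge_4 by auto
    then have "E (q 1) (q 3)"
      using cross[of "q 1" u "q 2" "q 3"] uv q2_less[of 3] edge_iff[of 1 2] k_ge_4 by auto
    then show False using edge_iff[of 1 3] k_ge_4 by auto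
  qed
  have "i \<le> k - 1 \<Longrightarrow> q i < v" if "3 \<le> i" for i
    using that
  proof (induction rule: dec_induct)
    case base
    show ?case by (fact \<open>q 3 < v\<close>)
  next
    case (step l)
    show ?case
    proof (rule ccontr)
      assume "\<not> q (Suc l) < v"
      then have "E (q 2) (q (Suc l))"
        using cross[of "q 2" "q l" v "q (Suc l)"] q2_less[of l] step uv edge_next[of l]
        by (simp add: less_imp_le not_less)
      then show False using edge_iff[of 2 "Suc l"] step by auto
    qed
  qed
  then have "q (k - 1) < v" using k_ge_4 by simp
  then have "E (q 2) (q 0)"
    using cross[of "q 2" "q (k - 1)" v "q 0"] q2_last uv edge_iff[of "k - 1" 0] k_ge_4 by auto
  then show False using edge_iff[of 2 0] k_ge_4 by auto
qed

lemma q_less_q2: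
  assumes "2 < i" "i < k"
  shows "q i < q 2"
proof -
  have "i \<le> k - 1" using assms(2) by simp
  then show ?thesis
  proof (induction rule: inc_induct)
    case base
    show ?case by (fact q_last_less_q2)
  next
    case (step l)
    show ?case
    proof (rule ccontr)
      assume "\<not> q l < q 2"
      then have "q 2 < q l" using q_linear[of l 2] step assms by auto
      then have "E (q 1) (q l)"
        using cross[of "q 1" "q (Suc l)" "q 2" "q l"] q1_less[of "Suc l"] step assms
          edge_iff[of 1 2] edge_iff[of "Suc l" l] k_ge_4
        by (simp add: less_imp_le)
      then show False using edge_iff[of 1 l] step assms by force
    qed
  qed
qed

lemma q_antimono:
  assumes "2 \<le> j" "j < i" "i < k"
  shows "q i < q j"
  using assms
proof (induction j arbitrary: i rule: nat_induct_at_least)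
  case base
  then show ?case by (rule q_less_q2)
next
  case (Suc j)
  have last: "q (k - 1) < q (Suc j)"
  proof (rule ccontr)
    assume "\<not> q (k - 1) < q (Suc j)"
    then have "q (Suc j) < q (k - 1)" using q_linear[of "k - 1" "Suc j"] Suc by auto
    then have "E (q (Suc j)) (q 0)"
      using cross[of "q (Suc j)" "q (k - 1)" "q j" "q 0"] Suc top[of j]
        edge_iff[of "Suc j" j] edge_iff[of "k - 1" 0] k_ge_4
      by (simp add: less_imp_le)
    then show False using edge_iff[of "Suc j" 0] Suc by force
  qed
  have "i \<le> k - 1" using Suc by simp
  then show ?case
  proof (induction rule: inc_induct)
    case base
    show ?case by (fact last)
  next
    case (step l)
    show ?case
    proof (rule ccontr)
      assume "\<not> q l < q (Suc j)"
      then have "q (Suc j) < q l" using q_linear[of l "Suc j"] step Suc by auto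
      then have "E (q (Suc l)) (q j)"
        using cross[of "q (Suc l)" "q (Suc j)" "q l" "q j"] Suc.IH[of l] step Suc
          edge_iff[of "Suc l" l] edge_iff[of "Suc j" j]
        by (simp add: less_imp_le)
      then show False using edge_iff[of "Suc l" j] step Suc by force
    qed
  qed
qed

theorem descending:
  "q 2 < q 0 \<and> (\<forall>i. 2 \<le> i \<and> i + 1 < k \<longrightarrow> q (i + 1) < q i) \<and> q 1 < q (k - 1)"
  using q_less_q0[of 2] q_antimono oriented k_ge_4 by auto

end

theorem proposition4:
  fixes V :: "'a::linorder set" and E :: "'a \<Rightarrow> 'a \<Rightarrow> bool"
    and k :: nat and p :: "nat \<Rightarrow> 'a"
  assumes "persistent_graph V E"
    and "k \<ge> 4"
    and "induced_cycle V E k p"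
  shows "\<exists>s<k. \<exists>rv. let q = cyc_reindex k s rv p in
           q 2 < q 0 \<and> (\<forall>i. 2 \<le> i \<and> i + 1 < k \<longrightarrow> q (i + 1) < q i) \<and> q 1 < q (k - 1)"
proof -
  from assms(2) have "3 \<le> k" by simp
  then obtain s rv where "s < k"
    and "\<And>i. i < k \<Longrightarrow> cyc_reindex k s rv p i \<le> cyc_reindex k s rv p 0"
    and "cyc_reindex k s rv p 1 < cyc_reindex k s rv p (k - 1)"
    using cyc_reindex_rooted[OF assms(3)] by blast
  then interpret rooted_cycle V E k "cyc_reindex k s rv p"
    using assms induced_cycle_cyc_reindex by unfold_locales auto
  show ?thesis using descending \<open>s < k\<close> unfolding Let_def by blast
qed

end
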